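(* Let $(A\mid R)$ and $(A'\mid R')$ be finite presentations such that $(A'\mid R')$ is obtained from $(A\mid R)$ by one of the transformations (I)–(VII). Then $\langle A\mid R\rangle\cong\langle A'\mid R'\rangle$.
   Context: $\mathbb{M}_A$ is the free magma on a non-empty set $A$ (non-associative words with $x+y=(x,y)$); $\mathbb{M}_A^2$ has componentwise operation. A closed congruence on $\mathbb{M}_A$ is an equivalence relation $\theta$ that is a submagma of $\mathbb{M}_A^2$ and satisfies: $(x+x',y+y')\in\theta\Rightarrow (x,y),(x',y')\in\theta$. For $X\subseteq\mathbb{M}_A^2$, $\boxminus(X)$ is the least closed congruence containing $X$. A finite presentation is $(A\mid R)$ with $A$ finite non-empty and $R\subseteq\mathbb{M}_A^2$ finite; $\langle A\mid R\rangle=\mathbb{M}_A/\boxminus(R)$. The minimal generating set of $\mathbb{M}_A^2$ is $\mathcal{G}(\mathbb{M}_A^2)=(A\times\mathbb{M}_A)\cup(\mathbb{M}_A\times A)$; for $p\in\mathbb{M}_A^2$, $\mathbf{g}(p)$ is defined recursively: $\mathbf{g}(p)=\mathbf{g}(p_1)\cup\mathbf{g}(p_2)$ if $p=p_1+p_2$ with $p_1,p_2\in\mathbb{M}_A^2$ (i.e. both coordinates of $p$ are decomposable), and $\mathbf{g}(p)=\{p\}$ otherwise; for a set $S$, $\mathbf{g}(S)=\bigcup_{p\in S}\mathbf{g}(p)$. For $y\in\mathbb{M}_A$, $g(y)\subseteq A$ is the set of letters occurring in $y$. For $a\in A$, $y\in\mathbb{M}_A$, $f_{a\to y}:\mathbb{M}_A\to\mathbb{M}_A$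 is the homomorphism sending $a\mapsto y$ and fixing other generators, and $f^2_{a\to y}$ applies it to both coordinates of each pair of a set. The transformations are: (I) if some $(x,y)\in R$ is not in $\mathcal{G}(\mathbb{M}_A^2)$, replace by $(A\mid\mathbf{g}(R))$. (II) if $(a,y),(a,y')\in R\cap(A\times(\mathbb{M}_A\setminus A))$ with $y\neq y'$, replace by $(A\mid (R\setminus\{(a,y')\})\cup\mathbf{g}((y,y')))$. (III) if $(x,b),(x',b)\in R\cap((\mathbb{M}_A\setminus A)\times A)$ with $x\neq x'$, replace by $(A\mid (R\setminus\{(x',b)\})\cup\mathbf{g}((x,x')))$. (IV) if some $(x,y)\in R$ has $x\notin A$, replace by $(A\mid (R\setminus\{(x,y)\})\cup\{(y,x)\})$. (V) if some $a\in A$ has $(a,y)\notin R$ for all $y\in\mathbb{M}_A$ and $(a,a)\notin R$, replace by $(A\mid R\cup\{(a,a)\})$. (VI) if $(a,y),(a',y)\in R\cap(A\times\mathbb{M}_A)$ with $a\neq a'$, replace by $(A\setminus\{a'\}\mid f^2_{a'\to a}(R\setminus\{(a',y)\}))$. (VII) if some $(a,y)\in R\cap(A\times\mathbb{M}_A)$ has $a\notin g(y)$ and $(a,y')\notin R$ for every $y'\neq y$, replace by $(A\setminus\{a\}\mid f^2_{a\to y}(R))$. *)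

theory Defs
  imports Main
begin

datatype 'a magma = Gen 'a | Op "'a magma" "'a magma"

definition words :: "'a set \<Rightarrow> 'a magma set" where
  "words A = {w. set_magma w \<subseteq> A}"

definition is_letter :: "'a magma \<Rightarrow> bool" where
  "is_letter w \<longleftrightarrow> (\<exists>a. w = Gen a)"

definition closed_cong :: "'a set \<Rightarrow> ('a magma \<times> 'a magma) set \<Rightarrow> bool" where
  "closed_cong A \<theta> \<longleftrightarrow>
     equiv (words A) \<theta> \<and>
     (\<forall>x y x' y'. (x, y) \<in> \<theta> \<longrightarrow> (x', y') \<in> \<theta> \<longrightarrow> (Op x x', Op y y') \<in> \<theta>) \<and>
     (\<forall>x y x' y'. (Op x x', Op y y') \<in> \<theta> \<longrightarrow> (x, y) \<in> \<theta> \<and> (x', y') \<in> \<theta>)"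

definition gen_cong :: "'a set \<Rightarrow> ('a magma \<times> 'a magma) set \<Rightarrow> ('a magma \<times> 'a magma) set" where
  "gen_cong A X = \<Inter>{\<theta>. closed_cong A \<theta> \<and> X \<subseteq> \<theta>}"

definition fin_pres :: "'a set \<Rightarrow> ('a magma \<times> 'a magma) set \<Rightarrow> bool" where
  "fin_pres A R \<longleftrightarrow> finite A \<and> A \<noteq> {} \<and> finite R \<and> R \<subseteq> words A \<times> words A"

definition pres_carrier :: "'a set \<Rightarrow> ('a magma \<times> 'a magma) set \<Rightarrow> 'a magma set set" where
  "pres_carrier A R = words A // gen_cong A R"

text \<open>Operation on classes: [x] + [y] = [x+y] (well defined for a congruence).\<close>
definition pres_op :: "'a set \<Rightarrow> ('a magma \<times> 'a magma) set \<Rightarrow> 'a magma set \<Rightarrow> 'a magma set \<Rightarrow> 'a magma set" where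
  "pres_op A R X Y = (\<Union>x\<in>X. \<Union>y\<in>Y. gen_cong A R `` {Op x y})"

definition pres_iso :: "'a set \<Rightarrow> ('a magma \<times> 'a magma) set \<Rightarrow> 'b set \<Rightarrow> ('b magma \<times> 'b magma) set \<Rightarrow> bool" where
  "pres_iso A R A' R' \<longleftrightarrow>
    (\<exists>h. bij_betw h (pres_carrier A R) (pres_carrier A' R') \<and>
         (\<forall>X\<in>pres_carrier A R. \<forall>Y\<in>pres_carrier A R.
             h (pres_op A R X Y) = pres_op A' R' (h X) (h Y)))"

fun gdec :: "'a magma \<times> 'a magma \<Rightarrow> ('a magma \<times> 'a magma) set" where
  "gdec (Op x1 x2, Op y1 y2) = gdec (x1, y1) \<union> gdec (x2, y2)"
| "gdec p = {p}"

definition gdec_set :: "('a magma \<times> 'a magma) set \<Rightarrow> ('a magma \<times> 'a magma) set" where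
  "gdec_set S = (\<Union>p\<in>S. gdec p)"

text \<open>Minimal generating set of M_A^2.\<close>
definition gens2 :: "'a set \<Rightarrow> ('a magma \<times> 'a magma) set" where
  "gens2 A = (Gen ` A \<times> words A) \<union> (words A \<times> Gen ` A)"

primrec subst :: "'a \<Rightarrow> 'a magma \<Rightarrow> 'a magma \<Rightarrow> 'a magma" where
  "subst a y (Gen b) = (if b = a then y else Gen b)"
| "subst a y (Op u v) = Op (subst a y u) (subst a y v)"

definition subst2 :: "'a \<Rightarrow> 'a magma \<Rightarrow> ('a magma \<times> 'a magma) set \<Rightarrow> ('a magma \<times> 'a magma) set" where
  "subst2 a y S = (\<lambda>(u, v). (subst a y u, subst a y v)) ` S"

definition transformation ::
  "'a set \<Rightarrow> ('a magma \<times> 'a magma) set \<Rightarrow> 'a set \<Rightarrow> ('a magma \<times> 'a magma) set \<Rightarrow> bool" where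
  "transformation A R A' R' \<longleftrightarrow>
    \<comment> \<open>(I)\<close>
    ((\<exists>p\<in>R. p \<notin> gens2 A) \<and> A' = A \<and> R' = gdec_set R)
  \<or> \<comment> \<open>(II)\<close>
    (\<exists>a y y'. a \<in> A \<and> (Gen a, y) \<in> R \<and> (Gen a, y') \<in> R \<and>
       y \<in> words A - Gen ` A \<and> y' \<in> words A - Gen ` A \<and> y \<noteq> y' \<and>
       A' = A \<and> R' = (R - {(Gen a, y')}) \<union> gdec (y, y'))
  \<or> \<comment> \<open>(III)\<close>
    (\<exists>x x' b. b \<in> A \<and> (x, Gen b) \<in> R \<and> (x', Gen b) \<in> R \<and>
       x \<in> words A - Gen ` A \<and> x' \<in> words A - Gen ` A \<and> x \<noteq> x' \<and>
       A' = A \<and> R' = (R - {(x', Gen b)}) \<union> gdec (x, x'))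
  \<or> \<comment> \<open>(IV)\<close>
    (\<exists>x y. (x, y) \<in> R \<and> x \<notin> Gen ` A \<and>
       A' = A \<and> R' = (R - {(x, y)}) \<union> {(y, x)})
  \<or> \<comment> \<open>(V)\<close>
    (\<exists>a\<in>A. (\<forall>y\<in>words A. (Gen a, y) \<notin> R) \<and> (Gen a, Gen a) \<notin> R \<and>
       A' = A \<and> R' = R \<union> {(Gen a, Gen a)})
  \<or> \<comment> \<open>(VI)\<close>
    (\<exists>a a' y. a \<in> A \<and> a' \<in> A \<and> y \<in> words A \<and> (Gen a, y) \<in> R \<and> (Gen a', y) \<in> R \<and> a \<noteq> a' \<and>
       A' = A - {a'} \<and> R' = subst2 a' (Gen a) (R - {(Gen a', y)}))
  \<or> \<comment> \<open>(VII)\<close>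
    (\<exists>a y. a \<in> A \<and> y \<in> words A \<and> (Gen a, y) \<in> R \<and> a \<notin> set_magma y \<and>
       (\<forall>y'\<in>words A. y' \<noteq> y \<longrightarrow> (Gen a, y') \<notin> R) \<and>
       A' = A - {a} \<and> R' = subst2 a y R)"

end

theory Submission
  imports Defs
begin

text \<open>
  Transformations (I)--(V) keep the generators and replace the relations by a set that generates
  the same closed congruence, so the two presented magmas coincide. Transformations (VI) and (VII)
  eliminate a generator \<open>c\<close> that is congruent to a word \<open>t\<close> not containing it. The
  substitution \<open>c \<mapsto> t\<close> is a homomorphism from \<open>\<M>\<^sub>A\<close> onto \<open>\<M>\<^bsub>A - {c}\<^esub>\<close> which maps
  every word to a congruent one; hence the congruence generated by the substituted relations
  pulls back to the one generated by the original relations, and the substitution induces the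
  isomorphism.
\<close>

lemma words_Gen [simp]: "Gen a \<in> words A \<longleftrightarrow> a \<in> A"
  by (simp add: words_def)

lemma words_Op [simp]: "Op x y \<in> words A \<longleftrightarrow> x \<in> words A \<and> y \<in> words A"
  by (simp add: words_def)

lemma words_mono: "A \<subseteq> B \<Longrightarrow> words A \<subseteq> words B"
  by (auto simp: words_def)

lemma closed_congI:
  assumes "\<theta> \<subseteq> words A \<times> words A"
    and "\<And>x. x \<in> words A \<Longrightarrow> (x, x) \<in> \<theta>"
    and "\<And>x y. (x, y) \<in> \<theta> \<Longrightarrow> (y, x) \<in> \<theta>"
    and "\<And>x y z. (x, y) \<in> \<theta> \<Longrightarrow> (y, z) \<in> \<theta> \<Longrightarrow> (x, z) \<in> \<theta>"
    and "\<And>x y x' y'. (Op x x', Op y y') \<in> \<theta> \<longleftrightarrow> (x, y) \<in> \<theta> \<and> (x', y') \<in> \<theta>"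
  shows "closed_cong A \<theta>"
  unfolding closed_cong_def equiv_def refl_on_def sym_def trans_def using assms by blast

context
  fixes A :: "'a set" and \<theta> :: "('a magma \<times> 'a magma) set"
  assumes closed: "closed_cong A \<theta>"
begin

lemma closed_cong_equiv: "equiv (words A) \<theta>"
  using closed by (simp add: closed_cong_def)

lemma closed_cong_words: "\<theta> \<subseteq> words A \<times> words A"
  using closed_cong_equiv by (rule equiv_type)

lemma closed_cong_refl: "x \<in> words A \<Longrightarrow> (x, x) \<in> \<theta>"
  using closed_cong_equiv by (simp add: equiv_class_eq_iff)

lemma closed_cong_sym: "(x, y) \<in> \<theta> \<Longrightarrow> (y, x) \<in> \<theta>"
  using closed_cong_equiv by (meson equivE symD)

lemma closed_cong_trans: "(x, y) \<in> \<theta> \<Longrightarrow> (y, z) \<in> \<theta> \<Longrightarrow> (x, z) \<in> \<theta>"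
  using closed_cong_equiv by (meson equivE transD)

lemma closed_cong_Op_iff: "(Op x x', Op y y') \<in> \<theta> \<longleftrightarrow> (x, y) \<in> \<theta> \<and> (x', y') \<in> \<theta>"
  using closed unfolding closed_cong_def by blast

lemma closed_cong_gdec_iff: "gdec p \<subseteq> \<theta> \<longleftrightarrow> p \<in> \<theta>"
  by (induction p rule: gdec.induct) (auto simp: closed_cong_Op_iff)

lemma closed_cong_class_Op:
  assumes "x \<in> words A" and "y \<in> words A"
  shows "(\<Union>x'\<in>\<theta> `` {x}. \<Union>y'\<in>\<theta> `` {y}. \<theta> `` {Op x' y'}) = \<theta> `` {Op x y}"
proof
  show "\<theta> `` {Op x y} \<subseteq> (\<Union>x'\<in>\<theta> `` {x}. \<Union>y'\<in>\<theta> `` {y}. \<theta> `` {Op x' y'})"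
    using assms closed_cong_refl by blast
  show "(\<Union>x'\<in>\<theta> `` {x}. \<Union>y'\<in>\<theta> `` {y}. \<theta> `` {Op x' y'}) \<subseteq> \<theta> `` {Op x y}"
    by (blast intro: closed_cong_trans closed_cong_Op_iff[THEN iffD2])
qed

end

lemma closed_cong_inv_image:
  assumes closed: "closed_cong B \<theta>"
    and maps: "\<And>u. u \<in> words A \<Longrightarrow> f u \<in> words B"
    and hom: "\<And>x y. f (Op x y) = Op (f x) (f y)"
  shows "closed_cong A (inv_image \<theta> f \<inter> words A \<times> words A)"
proof (rule closed_congI)
  show "(x, z) \<in> inv_image \<theta> f \<inter> words A \<times> words A"
    if "(x, y) \<in> inv_image \<theta> f \<inter> words A \<times> words A"
      and "(y, z) \<in> inv_image \<theta> f \<inter> words A \<times> words A" for x y z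
    using that closed_cong_trans[OF closed] by auto
qed (auto simp: hom closed_cong_Op_iff[OF closed] maps closed_cong_refl[OF closed]
       intro: closed_cong_sym[OF closed])

lemma closed_cong_restrict:
  assumes closed: "closed_cong A \<theta>" and "B \<subseteq> A"
  shows "closed_cong B (\<theta> \<inter> words B \<times> words B)"
proof (rule closed_congI)
  show "(x, z) \<in> \<theta> \<inter> words B \<times> words B"
    if "(x, y) \<in> \<theta> \<inter> words B \<times> words B" and "(y, z) \<in> \<theta> \<inter> words B \<times> words B" for x y z
    using that closed_cong_trans[OF closed] by auto
qed (use words_mono[OF \<open>B \<subseteq> A\<close>] in
      \<open>auto simp: closed_cong_Op_iff[OF closed] intro: closed_cong_refl[OF closed]
        closed_cong_sym[OF closed]\<close>)

lemma closed_cong_full: "closed_cong A (words A \<times> words A)"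
  by (rule closed_congI) auto

lemma closed_cong_Inter:
  assumes "S \<noteq> {}" and closed: "\<And>\<theta>. \<theta> \<in> S \<Longrightarrow> closed_cong A \<theta>"
  shows "closed_cong A (\<Inter>S)"
proof (rule closed_congI)
  from \<open>S \<noteq> {}\<close> obtain \<theta> where "\<theta> \<in> S"
    by blast
  then show "\<Inter>S \<subseteq> words A \<times> words A"
    using closed_cong_words[OF closed] by blast
  show "(x, x) \<in> \<Inter>S" if "x \<in> words A" for x
    using that closed closed_cong_refl by blast
  show "(y, x) \<in> \<Inter>S" if "(x, y) \<in> \<Inter>S" for x y
    using that closed closed_cong_sym by blast
  show "(x, z) \<in> \<Inter>S" if "(x, y) \<in> \<Inter>S" and "(y, z) \<in> \<Inter>S" for x y z
    using that closed closed_cong_trans by blast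
  show "(Op x x', Op y y') \<in> \<Inter>S \<longleftrightarrow> (x, y) \<in> \<Inter>S \<and> (x', y') \<in> \<Inter>S" for x y x' y'
    using closed closed_cong_Op_iff by blast
qed

lemma closed_cong_gen_cong:
  assumes "X \<subseteq> words A \<times> words A"
  shows "closed_cong A (gen_cong A X)"
  unfolding gen_cong_def
  using assms closed_cong_full by (blast intro: closed_cong_Inter)

lemma gen_cong_subset: "X \<subseteq> gen_cong A X"
  unfolding gen_cong_def by blast

lemma gen_cong_minimal: "closed_cong A \<theta> \<Longrightarrow> X \<subseteq> \<theta> \<Longrightarrow> gen_cong A X \<subseteq> \<theta>"
  unfolding gen_cong_def by blast

lemma gen_cong_memI: "(\<And>\<theta>. closed_cong A \<theta> \<Longrightarrow> X \<subseteq> \<theta> \<Longrightarrow> p \<in> \<theta>) \<Longrightarrow> p \<in> gen_cong A X"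
  unfolding gen_cong_def by blast

lemma gen_cong_eqI:
  assumes X: "X \<subseteq> words A \<times> words A"
    and "X \<subseteq> gen_cong A Y" and "Y \<subseteq> gen_cong A X"
  shows "gen_cong A X = gen_cong A Y"
proof -
  have Y: "Y \<subseteq> words A \<times> words A"
    using \<open>Y \<subseteq> gen_cong A X\<close> closed_cong_words[OF closed_cong_gen_cong[OF X]] by blast
  show ?thesis
    using assms gen_cong_minimal[OF closed_cong_gen_cong[OF X]]
      gen_cong_minimal[OF closed_cong_gen_cong[OF Y]]
    by (rule_tac subset_antisym) simp_all
qed

lemma gen_cong_replace:
  assumes R: "R \<subseteq> words A \<times> words A" and S: "S \<subseteq> gen_cong A R"
    and q: "q \<in> gen_cong A ((R - {q}) \<union> S)"
  shows "gen_cong A ((R - {q}) \<union> S) = gen_cong A R"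
proof (rule sym, rule gen_cong_eqI[OF R])
  show "R \<subseteq> gen_cong A ((R - {q}) \<union> S)"
    using q gen_cong_subset[of "(R - {q}) \<union> S" A] by blast
  show "(R - {q}) \<union> S \<subseteq> gen_cong A R"
    using S gen_cong_subset[of R A] by blast
qed

lemma gen_cong_gdec_set:
  assumes R: "R \<subseteq> words A \<times> words A"
  shows "gen_cong A (gdec_set R) = gen_cong A R"
proof (rule sym, rule gen_cong_eqI[OF R])
  show "R \<subseteq> gen_cong A (gdec_set R)"
  proof (intro subsetI gen_cong_memI)
    fix p \<theta> assume "p \<in> R" and closed: "closed_cong A \<theta>" and "gdec_set R \<subseteq> \<theta>"
    then have "gdec p \<subseteq> \<theta>"
      unfolding gdec_set_def by blast
    then show "p \<in> \<theta>"
      using closed_cong_gdec_iff[OF closed] by blast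
  qed
  show "gdec_set R \<subseteq> gen_cong A R"
    using gen_cong_subset closed_cong_gdec_iff[OF closed_cong_gen_cong[OF R]]
    unfolding gdec_set_def by blast
qed

lemma gen_cong_merge_same_fst:
  assumes R: "R \<subseteq> words A \<times> words A" and "(x, y) \<in> R" "(x, y') \<in> R" "y \<noteq> y'"
  shows "gen_cong A ((R - {(x, y')}) \<union> gdec (y, y')) = gen_cong A R"
proof (rule gen_cong_replace[OF R])
  have closed: "closed_cong A (gen_cong A R)"
    using R by (rule closed_cong_gen_cong)
  have "(x, y) \<in> gen_cong A R" "(x, y') \<in> gen_cong A R"
    using assms gen_cong_subset[of R A] by blast+
  then have "(y, y') \<in> gen_cong A R"
    by (meson closed closed_cong_sym closed_cong_trans)
  then show "gdec (y, y') \<subseteq> gen_cong A R"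
    using closed_cong_gdec_iff[OF closed] by blast
  show "(x, y') \<in> gen_cong A ((R - {(x, y')}) \<union> gdec (y, y'))"
  proof (rule gen_cong_memI)
    fix \<theta> assume closed': "closed_cong A \<theta>" and "(R - {(x, y')}) \<union> gdec (y, y') \<subseteq> \<theta>"
    then have "(x, y) \<in> \<theta>" "(y, y') \<in> \<theta>"
      using assms closed_cong_gdec_iff[OF closed'] by blast+
    then show "(x, y') \<in> \<theta>"
      by (rule closed_cong_trans[OF closed'])
  qed
qed

lemma gen_cong_merge_same_snd:
  assumes R: "R \<subseteq> words A \<times> words A" and "(x, z) \<in> R" "(x', z) \<in> R" "x \<noteq> x'"
  shows "gen_cong A ((R - {(x', z)}) \<union> gdec (x, x')) = gen_cong A R"
proof (rule gen_cong_replace[OF R])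
  have closed: "closed_cong A (gen_cong A R)"
    using R by (rule closed_cong_gen_cong)
  have "(x, z) \<in> gen_cong A R" "(x', z) \<in> gen_cong A R"
    using assms gen_cong_subset[of R A] by blast+
  then have "(x, x') \<in> gen_cong A R"
    by (meson closed closed_cong_sym closed_cong_trans)
  then show "gdec (x, x') \<subseteq> gen_cong A R"
    using closed_cong_gdec_iff[OF closed] by blast
  show "(x', z) \<in> gen_cong A ((R - {(x', z)}) \<union> gdec (x, x'))"
  proof (rule gen_cong_memI)
    fix \<theta> assume closed': "closed_cong A \<theta>" and "(R - {(x', z)}) \<union> gdec (x, x') \<subseteq> \<theta>"
    then have "(x', x) \<in> \<theta>" "(x, z) \<in> \<theta>"
      using assms closed_cong_gdec_iff[OF closed'] closed_cong_sym[OF closed'] by blast+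
    then show "(x', z) \<in> \<theta>"
      by (rule closed_cong_trans[OF closed'])
  qed
qed

lemma gen_cong_swap:
  assumes R: "R \<subseteq> words A \<times> words A" and "(x, y) \<in> R"
  shows "gen_cong A ((R - {(x, y)}) \<union> {(y, x)}) = gen_cong A R"
proof (rule gen_cong_replace[OF R])
  show "{(y, x)} \<subseteq> gen_cong A R"
    using assms gen_cong_subset[of R A] closed_cong_sym[OF closed_cong_gen_cong[OF R]] by blast
  show "(x, y) \<in> gen_cong A ((R - {(x, y)}) \<union> {(y, x)})"
    by (auto intro!: gen_cong_memI intro: closed_cong_sym)
qed

lemma gen_cong_insert_diag:
  assumes R: "R \<subseteq> words A \<times> words A" and "a \<in> A"
  shows "gen_cong A (R \<union> {(Gen a, Gen a)}) = gen_cong A R"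
proof -
  have "gen_cong A ((R - {(Gen a, Gen a)}) \<union> {(Gen a, Gen a)}) = gen_cong A R"
  proof (rule gen_cong_replace[OF R])
    show "{(Gen a, Gen a)} \<subseteq> gen_cong A R"
      using \<open>a \<in> A\<close> closed_cong_refl[OF closed_cong_gen_cong[OF R]] by simp
    show "(Gen a, Gen a) \<in> gen_cong A ((R - {(Gen a, Gen a)}) \<union> {(Gen a, Gen a)})"
      by (rule subsetD[OF gen_cong_subset]) simp
  qed
  then show ?thesis
    by simp
qed

lemma pres_iso_gen_cong_eq: "gen_cong A R' = gen_cong A R \<Longrightarrow> pres_iso A R A R'"
  unfolding pres_iso_def pres_carrier_def pres_op_def by (intro exI[of _ id]) simp

lemma pres_op_classes:
  assumes "R \<subseteq> words A \<times> words A" and "x \<in> words A" and "y \<in> words A"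
  shows "pres_op A R (gen_cong A R `` {x}) (gen_cong A R `` {y}) = gen_cong A R `` {Op x y}"
  unfolding pres_op_def using closed_cong_class_Op[OF closed_cong_gen_cong] assms .

lemma pres_iso_hom_onto:
  assumes R: "R \<subseteq> words A \<times> words A" and R': "R' \<subseteq> words A' \<times> words A'"
    and maps: "\<And>u. u \<in> words A \<Longrightarrow> f u \<in> words A'"
    and onto: "words A' \<subseteq> f ` words A"
    and hom: "\<And>x y. f (Op x y) = Op (f x) (f y)"
    and kernel: "gen_cong A R = inv_image (gen_cong A' R') f \<inter> words A \<times> words A"
  shows "pres_iso A R A' R'"
proof -
  let ?\<theta> = "gen_cong A R" and ?\<theta>' = "gen_cong A' R'"
  have closed: "closed_cong A ?\<theta>" and closed': "closed_cong A' ?\<theta>'"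
    using R R' by (simp_all add: closed_cong_gen_cong)
  define h where "h X = ?\<theta>' `` (f ` X)" for X
  have h_class: "h (?\<theta> `` {x}) = ?\<theta>' `` {f x}" if "x \<in> words A" for x
    unfolding h_def using that kernel closed_cong_refl[OF closed]
    by (auto intro: closed_cong_trans[OF closed'])
  have "inj_on h (words A // ?\<theta>)"
  proof (rule inj_onI)
    fix X Y assume "X \<in> words A // ?\<theta>" "Y \<in> words A // ?\<theta>" "h X = h Y"
    then obtain x y where "x \<in> words A" "y \<in> words A" "X = ?\<theta> `` {x}" "Y = ?\<theta> `` {y}"
      and "?\<theta>' `` {f x} = ?\<theta>' `` {f y}"
      by (metis h_class quotientE)
    then show "X = Y"
      using kernel maps eq_equiv_class_iff[OF closed_cong_equiv[OF closed]]
        eq_equiv_class_iff[OF closed_cong_equiv[OF closed']] by auto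
  qed
  moreover have "h ` (words A // ?\<theta>) = words A' // ?\<theta>'"
  proof -
    have "h ` (words A // ?\<theta>) = (\<lambda>w. ?\<theta>' `` {w}) ` f ` words A"
      by (simp add: quotient_def UNION_singleton_eq_range image_image h_class cong: image_cong)
    also have "f ` words A = words A'"
      using maps onto by blast
    finally show ?thesis
      by (simp add: quotient_def UNION_singleton_eq_range)
  qed
  moreover have "h (pres_op A R X Y) = pres_op A' R' (h X) (h Y)"
    if "X \<in> words A // ?\<theta>" and "Y \<in> words A // ?\<theta>" for X Y
    using that by (auto elim!: quotientE simp: pres_op_classes R R' h_class maps hom)
  ultimately show ?thesis
    unfolding pres_iso_def pres_carrier_def bij_betw_def by blast
qed

lemma subst_words: "u \<in> words A \<Longrightarrow> t \<in> words (A - {c}) \<Longrightarrow> subst c t u \<in> words (A - {c})"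
  by (induction u) auto

lemma subst_ident: "c \<notin> set_magma u \<Longrightarrow> subst c t u = u"
  by (induction u) auto

lemma closed_cong_subst:
  assumes closed: "closed_cong A \<theta>" and "(Gen c, t) \<in> \<theta>" and "u \<in> words A"
  shows "(u, subst c t u) \<in> \<theta>"
  using \<open>u \<in> words A\<close>
  by (induction u) (auto simp: assms(2) closed_cong_refl[OF closed] closed_cong_Op_iff[OF closed])

lemma closed_cong_subst_iff:
  assumes closed: "closed_cong A \<theta>" and "(Gen c, t) \<in> \<theta>" and "u \<in> words A" and "v \<in> words A"
  shows "(subst c t u, subst c t v) \<in> \<theta> \<longleftrightarrow> (u, v) \<in> \<theta>"
  using closed_cong_subst[OF closed \<open>(Gen c, t) \<in> \<theta>\<close>] assms(3,4)
  by (meson closed_cong_sym[OF closed] closed_cong_trans[OF closed])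

lemma pres_iso_eliminate_generator:
  assumes R: "R \<subseteq> words A \<times> words A"
    and t: "t \<in> words (A - {c})" and c_t: "(Gen c, t) \<in> gen_cong A R"
  shows "pres_iso A R (A - {c}) (subst2 c t R)"
proof -
  let ?f = "subst c t" and ?\<theta> = "gen_cong A R" and ?\<theta>' = "gen_cong (A - {c}) (subst2 c t R)"
  have closed: "closed_cong A ?\<theta>"
    using R by (rule closed_cong_gen_cong)
  have maps: "?f u \<in> words (A - {c})" if "u \<in> words A" for u
    using that t by (rule subst_words)
  have R': "subst2 c t R \<subseteq> words (A - {c}) \<times> words (A - {c})"
    using R maps by (auto simp: subst2_def)
  have onto: "words (A - {c}) \<subseteq> ?f ` words A"
    using words_mono[of "A - {c}" A] by (force simp: words_def subst_ident)
  have "closed_cong A (inv_image ?\<theta>' ?f \<inter> words A \<times> words A)"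
    using closed_cong_gen_cong[OF R'] maps subst.simps(2) by (rule closed_cong_inv_image)
  then have "?\<theta> \<subseteq> inv_image ?\<theta>' ?f \<inter> words A \<times> words A"
  proof (rule gen_cong_minimal)
    show "R \<subseteq> inv_image ?\<theta>' ?f \<inter> words A \<times> words A"
      using R gen_cong_subset by (fastforce simp: subst2_def)
  qed
  moreover have "?\<theta>' \<subseteq> ?\<theta> \<inter> words (A - {c}) \<times> words (A - {c})"
  proof (rule gen_cong_minimal[OF closed_cong_restrict[OF closed]])
    have "(?f u, ?f v) \<in> ?\<theta>" if "(u, v) \<in> R" for u v
    proof -
      have "u \<in> words A" "v \<in> words A" "(u, v) \<in> ?\<theta>"
        using that R gen_cong_subset[of R A] by blast+
      then show ?thesis
        using closed_cong_subst_iff[OF closed c_t] by blast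
    qed
    then show "subst2 c t R \<subseteq> ?\<theta> \<inter> words (A - {c}) \<times> words (A - {c})"
      using R' by (auto simp: subst2_def)
  qed blast
  then have "inv_image ?\<theta>' ?f \<inter> words A \<times> words A \<subseteq> ?\<theta>"
    using closed_cong_subst_iff[OF closed c_t] by auto
  ultimately show ?thesis
    by (intro pres_iso_hom_onto[OF R R' maps onto]) auto
qed

lemma pres_iso_identify_generators:
  assumes R: "R \<subseteq> words A \<times> words A" and "a \<in> A" and "a \<noteq> a'"
    and "(Gen a, y) \<in> R" and "(Gen a', y) \<in> R"
  shows "pres_iso A R (A - {a'}) (subst2 a' (Gen a) (R - {(Gen a', y)}))"
proof -
  have closed: "closed_cong A (gen_cong A R)"
    using R by (rule closed_cong_gen_cong)
  have "(Gen a, y) \<in> gen_cong A R" "(Gen a', y) \<in> gen_cong A R"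
    using assms gen_cong_subset[of R A] by blast+
  then have "(Gen a', Gen a) \<in> gen_cong A R"
    by (meson closed closed_cong_sym closed_cong_trans)
  moreover have "subst2 a' (Gen a) (R - {(Gen a', y)}) = subst2 a' (Gen a) R"
  proof -
    let ?g = "\<lambda>(u, v). (subst a' (Gen a) u, subst a' (Gen a) v)"
    have "?g (Gen a', y) = ?g (Gen a, y)"
      using \<open>a \<noteq> a'\<close> by simp
    then have "?g (Gen a', y) \<in> ?g ` (R - {(Gen a', y)})"
      using assms by force
    then have "?g ` R \<subseteq> ?g ` (R - {(Gen a', y)})"
      by blast
    then show ?thesis
      unfolding subst2_def by blast
  qed
  ultimately show ?thesis
    using pres_iso_eliminate_generator[OF R] \<open>a \<in> A\<close> \<open>a \<noteq> a'\<close> by simp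
qed

theorem lemma7p7:
  fixes A A' :: "'a set" and R R' :: "('a magma \<times> 'a magma) set"
  assumes "fin_pres A R" and "fin_pres A' R'"
    and "transformation A R A' R'"
  shows "pres_iso A R A' R'"
proof -
  have R: "R \<subseteq> words A \<times> words A"
    using assms(1) by (simp add: fin_pres_def)
  from assms(3) show ?thesis
    unfolding transformation_def
  proof (elim disjE exE bexE conjE)
    show ?thesis if "A' = A" "R' = gdec_set R"
      unfolding that by (rule pres_iso_gen_cong_eq[OF gen_cong_gdec_set[OF R]])
    show ?thesis if "(Gen a, y) \<in> R" "(Gen a, y') \<in> R" "y \<noteq> y'" "A' = A"
      "R' = (R - {(Gen a, y')}) \<union> gdec (y, y')" for a y y'
      unfolding that(4,5)
      by (rule pres_iso_gen_cong_eq[OF gen_cong_merge_same_fst[OF R that(1-3)]])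
    show ?thesis if "(x, Gen b) \<in> R" "(x', Gen b) \<in> R" "x \<noteq> x'" "A' = A"
      "R' = (R - {(x', Gen b)}) \<union> gdec (x, x')" for x x' b
      unfolding that(4,5)
      by (rule pres_iso_gen_cong_eq[OF gen_cong_merge_same_snd[OF R that(1-3)]])
    show ?thesis if "(x, y) \<in> R" "A' = A" "R' = (R - {(x, y)}) \<union> {(y, x)}" for x y
      unfolding that(2,3) by (rule pres_iso_gen_cong_eq[OF gen_cong_swap[OF R that(1)]])
    show ?thesis if "a \<in> A" "A' = A" "R' = R \<union> {(Gen a, Gen a)}" for a
      unfolding that(2,3)
      by (rule pres_iso_gen_cong_eq[OF gen_cong_insert_diag[OF R that(1)]])
    show ?thesis if "a \<in> A" "a \<noteq> a'" "(Gen a, y) \<in> R" "(Gen a', y) \<in> R"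
      "A' = A - {a'}" "R' = subst2 a' (Gen a) (R - {(Gen a', y)})" for a a' y
      using that by (simp add: pres_iso_identify_generators[OF R])
    show ?thesis if "y \<in> words A" "(Gen a, y) \<in> R" "a \<notin> set_magma y"
      "A' = A - {a}" "R' = subst2 a y R" for a y
      using that pres_iso_eliminate_generator[OF R, of y a] gen_cong_subset
      by (auto simp: words_def)
  qed
qed

end
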